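(* Let $\mathcal{A}$ be a finite alphabet, $\Theta:\mathcal{A}^*\to\mathcal{A}^*$ an involutive antimorphism, and $\mathbf{u}\in\mathcal{A}^{\mathbb{N}}$ a recurrent infinite word with $D_\Theta(\mathbf{u})<+\infty$. Then the language of $\mathbf{u}$ is closed under $\Theta$, i.e., for every factor $w$ of $\mathbf{u}$, $\Theta(w)$ is also a factor of $\mathbf{u}$.
   Context: An involutive antimorphism on $\mathcal{A}^*$ is a map $\Theta$ with $\Theta^2=\mathrm{Id}$ and $\Theta(uv)=\Theta(v)\Theta(u)$ for all words $u,v$. A word $w$ is a $\Theta$-palindrome if $\Theta(w)=w$. For a finite word $w$, $\mathrm{Pal}_\Theta(w)$ is the set of distinct $\Theta$-palindromes occurring as factors of $w$ (including the empty word), and $G_\Theta(w)$ is the number of sets $\{a,\Theta(a)\}$ where $a$ is a letter occurring in $w$ with $a\neq\Theta(a)$. The $\Theta$-palindromic defect of a finite word is $D_\Theta(w)=|w|+1-G_\Theta(w)-\#\mathrm{Pal}_\Theta(w)$, and for an infinite word $\mathbf{u}$, $D_\Theta(\mathbf{u})=\sup\{D_\Theta(w): w \text{ a factor of } \mathbf{u}\}$. An infinite word is recurrent if each of its factors occurs in it infinitely many times. *)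

theory Defs
  imports Main
begin

definition inv_antimorphism :: "('a list \<Rightarrow> 'a list) \<Rightarrow> bool" where
  "inv_antimorphism \<Theta> \<longleftrightarrow> (\<forall>w. \<Theta> (\<Theta> w) = w) \<and> (\<forall>u v. \<Theta> (u @ v) = \<Theta> v @ \<Theta> u)"

definition is_factor :: "'a list \<Rightarrow> 'a list \<Rightarrow> bool" where
  "is_factor v w \<longleftrightarrow> (\<exists>p s. w = p @ v @ s)"

definition theta_pal_set :: "('a list \<Rightarrow> 'a list) \<Rightarrow> 'a list \<Rightarrow> 'a list set" where
  "theta_pal_set \<Theta> w = {v. is_factor v w \<and> \<Theta> v = v}"

definition G_theta :: "('a list \<Rightarrow> 'a list) \<Rightarrow> 'a list \<Rightarrow> nat" where
  "G_theta \<Theta> w = card {{[a], \<Theta> [a]} | a. a \<in> set w \<and> \<Theta> [a] \<noteq> [a]}"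

definition theta_defect :: "('a list \<Rightarrow> 'a list) \<Rightarrow> 'a list \<Rightarrow> int" where
  "theta_defect \<Theta> w = int (length w) + 1 - int (G_theta \<Theta> w) - int (card (theta_pal_set \<Theta> w))"

definition occurs_at :: "(nat \<Rightarrow> 'a) \<Rightarrow> 'a list \<Rightarrow> nat \<Rightarrow> bool" where
  "occurs_at u w i \<longleftrightarrow> w = map u [i..<i + length w]"

definition inf_factor :: "'a list \<Rightarrow> (nat \<Rightarrow> 'a) \<Rightarrow> bool" where
  "inf_factor w u \<longleftrightarrow> (\<exists>i. occurs_at u w i)"

definition recurrent :: "(nat \<Rightarrow> 'a) \<Rightarrow> bool" where
  "recurrent u \<longleftrightarrow> (\<forall>w. inf_factor w u \<longrightarrow> infinite {i. occurs_at u w i})"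

definition finite_theta_defect :: "('a list \<Rightarrow> 'a list) \<Rightarrow> (nat \<Rightarrow> 'a) \<Rightarrow> bool" where
  "finite_theta_defect \<Theta> u \<longleftrightarrow> (\<exists>B::int. \<forall>w. inf_factor w u \<longrightarrow> theta_defect \<Theta> w \<le> B)"

end

(* Appending a letter never decreases the Theta-defect, so the defects of the prefixes of u are
   bounded and nondecreasing, hence eventually constant. By recurrence a factor w occurs twice in
   this stable region. The prefix ending with the second occurrence has the same defect as the
   prefix one letter shorter, although its last letter is not new; so it ends with a new
   Theta-palindrome P. Since w occurred earlier, P is not a suffix of w; hence w is a suffix of P,
   and Theta w, a prefix of P, is a factor of u. *)

theory Submission
  imports Defs "HOL-Library.Sublist" "HOL-Library.Infinite_Set"
begin

lemma is_factor_eq_sublist: "is_factor = sublist"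
  by (intro ext) (simp add: is_factor_def sublist_def)

lemma theta_pal_set_eq: "theta_pal_set \<Theta> w = {v. sublist v w \<and> \<Theta> v = v}"
  by (simp add: theta_pal_set_def is_factor_eq_sublist)

lemma finite_theta_pal_set: "finite (theta_pal_set \<Theta> w)"
  unfolding theta_pal_set_eq by (rule finite_subset[of _ "set (sublists w)"]) auto

lemma theta_pal_set_mono_snoc: "theta_pal_set \<Theta> r \<subseteq> theta_pal_set \<Theta> (r @ [a])"
  unfolding theta_pal_set_eq by (auto simp: sublist_snoc)

lemma sublist_if_strict_prefix_of_suffix_snoc:
  assumes "strict_prefix v w" and "suffix w (r @ [a])"
  shows "sublist v r"
proof -
  obtain w' where "w = w' @ [a]" "suffix w' r"
    using assms by auto
  moreover have "prefix v w'"
    using assms(1) \<open>w = w' @ [a]\<close> by (metis prefix_snoc strict_prefix_def)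
  ultimately show ?thesis
    by (meson prefix_imp_sublist suffix_imp_sublist sublist_order.order.trans)
qed

lemma G_theta_eq_card_image:
  "G_theta \<Theta> w = card ((\<lambda>b. {[b], \<Theta> [b]}) ` {b \<in> set w. \<Theta> [b] \<noteq> [b]})"
  unfolding G_theta_def by (simp add: setcompr_eq_image)

lemma G_theta_snoc_le: "G_theta \<Theta> (r @ [a]) \<le> Suc (G_theta \<Theta> r)"
proof -
  let ?f = "\<lambda>b. {[b], \<Theta> [b]}" and ?S = "\<lambda>w. {b \<in> set w. \<Theta> [b] \<noteq> [b]}"
  have "card (?f ` ?S (r @ [a])) \<le> card (?f ` insert a (?S r))"
    by (intro card_mono image_mono) auto
  also have "\<dots> \<le> Suc (card (?f ` ?S r))"
    by (simp add: card_insert_if)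
  finally show ?thesis unfolding G_theta_eq_card_image .
qed

context
  fixes \<Theta> :: "'a list \<Rightarrow> 'a list"
  assumes antimorphism: "inv_antimorphism \<Theta>"
begin

lemma theta_append: "\<Theta> (v @ w) = \<Theta> w @ \<Theta> v"
  using antimorphism by (simp add: inv_antimorphism_def)

lemma theta_theta: "\<Theta> (\<Theta> w) = w"
  using antimorphism by (simp add: inv_antimorphism_def)

lemma theta_Nil: "\<Theta> [] = []"
  using theta_append[of "[]" "[]"] by simp

lemma length_theta: "length (\<Theta> w) = length w"
proof -
  have "length v \<le> length (\<Theta> v)" for v
  proof (induction v)
    case (Cons b v)
    have "\<Theta> [b] \<noteq> []" using theta_theta[of "[b]"] theta_Nil by auto
    then show ?case using Cons theta_append[of "[b]" v] by (cases "\<Theta> [b]") auto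
  qed simp
  from this[of w] this[of "\<Theta> w"] show ?thesis by (simp add: theta_theta)
qed

lemma theta_singleton: obtains b where "\<Theta> [a] = [b]"
  using length_theta[of "[a]"] by (auto simp: length_Suc_conv)

lemma prefix_theta_if_suffix_of_pal:
  assumes "suffix w P" and "\<Theta> P = P"
  shows "prefix (\<Theta> w) P"
proof -
  obtain y where "P = y @ w" using assms(1) by (auto simp: suffix_def)
  then have "P = \<Theta> w @ \<Theta> y" using assms(2) theta_append by metis
  then show ?thesis by simp
qed

text \<open>Two new palindromic factors of r @ [a] are both suffixes, so the shorter is a suffix and
  hence a proper prefix of the longer one, and thus already occurs in r.\<close>
lemma card_theta_pal_set_snoc_le:
  "card (theta_pal_set \<Theta> (r @ [a])) \<le> Suc (card (theta_pal_set \<Theta> r))"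
proof -
  let ?old = "theta_pal_set \<Theta> r" and ?new = "theta_pal_set \<Theta> (r @ [a]) - theta_pal_set \<Theta> r"
  have new_pal: "\<Theta> P = P \<and> suffix P (r @ [a]) \<and> \<not> sublist P r" if "P \<in> ?new" for P
    using that by (auto simp: theta_pal_set_eq sublist_snoc simp del: suffix_snoc)
  have eq_if_suffix: "P = Q" if "P \<in> ?new" "Q \<in> ?new" "suffix P Q" for P Q
  proof (rule ccontr)
    assume "P \<noteq> Q"
    then have "strict_prefix P Q"
      using prefix_theta_if_suffix_of_pal[OF \<open>suffix P Q\<close>] new_pal[OF that(1)] new_pal[OF that(2)]
      by (simp add: strict_prefix_def)
    moreover have "suffix Q (r @ [a])" using new_pal[OF that(2)] by simp
    ultimately have "sublist P r" by (rule sublist_if_strict_prefix_of_suffix_snoc)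
    then show False using new_pal[OF that(1)] by simp
  qed
  have "P = Q" if "P \<in> ?new" "Q \<in> ?new" for P Q
  proof -
    have "suffix P Q \<or> suffix Q P"
      using suffix_same_cases new_pal[OF that(1)] new_pal[OF that(2)] by blast
    then show ?thesis using eq_if_suffix that by auto
  qed
  then have "card ?new \<le> 1"
    using finite_theta_pal_set[of \<Theta> "r @ [a]"] by (simp add: card_le_Suc0_iff_eq)
  moreover have "card (theta_pal_set \<Theta> (r @ [a])) \<le> card (?old \<union> ?new)"
    using finite_theta_pal_set[of \<Theta>] by (intro card_mono) auto
  moreover have "card (?old \<union> ?new) \<le> card ?old + card ?new"
    by (rule card_Un_le)
  ultimately show ?thesis by simp
qed

lemma theta_pal_set_snoc_fresh_letter:
  assumes "\<Theta> [a] \<noteq> [a]" and "\<not> set (\<Theta> [a]) \<subseteq> set r"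
  shows "theta_pal_set \<Theta> (r @ [a]) = theta_pal_set \<Theta> r"
proof (rule antisym[OF subsetI theta_pal_set_mono_snoc])
  fix P assume P: "P \<in> theta_pal_set \<Theta> (r @ [a])"
  show "P \<in> theta_pal_set \<Theta> r"
  proof (rule ccontr)
    assume "P \<notin> theta_pal_set \<Theta> r"
    then have pal: "\<Theta> P = P" and "suffix P (r @ [a])" and "P \<noteq> []"
      using P by (auto simp: theta_pal_set_eq sublist_snoc simp del: suffix_snoc)
    then obtain Q where Q: "P = Q @ [a]" "suffix Q r" by auto
    obtain b where b: "\<Theta> [a] = [b]" using theta_singleton .
    have "suffix [a] P" using Q(1) by simp
    then have "prefix [b] P" using prefix_theta_if_suffix_of_pal[OF _ pal] b by metis
    moreover have "Q \<noteq> []" using pal Q(1) assms(1) by auto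
    ultimately have "b \<in> set Q" using Q(1) by (cases Q) auto
    then show False using assms(2) b set_mono_suffix[OF Q(2)] by auto
  qed
qed

lemma G_theta_snoc_eq:
  assumes "\<Theta> [a] = [a] \<or> a \<in> set r \<or> set (\<Theta> [a]) \<subseteq> set r"
  shows "G_theta \<Theta> (r @ [a]) = G_theta \<Theta> r"
proof -
  let ?f = "\<lambda>b. {[b], \<Theta> [b]}" and ?S = "\<lambda>w. {b \<in> set w. \<Theta> [b] \<noteq> [b]}"
  have "?f a \<in> ?f ` ?S r" if "\<Theta> [a] \<noteq> [a]"
  proof -
    obtain b where b: "\<Theta> [a] = [b]" using theta_singleton .
    then have "\<Theta> [b] = [a]" using theta_theta by metis
    show ?thesis
    proof (cases "a \<in> set r")
      case True
      then show ?thesis using that by (intro image_eqI[of _ _ a]) simp_all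
    next
      case False
      then have "b \<in> set r" "b \<noteq> a" using assms that b by auto
      moreover have "?f a = ?f b" using b \<open>\<Theta> [b] = [a]\<close> by (simp add: insert_commute)
      ultimately show ?thesis using \<open>\<Theta> [b] = [a]\<close> by (intro image_eqI[of _ _ b]) simp_all
    qed
  qed
  moreover have "?S (r @ [a]) = (if \<Theta> [a] = [a] then ?S r else insert a (?S r))"
    by auto
  ultimately have "?f ` ?S (r @ [a]) = ?f ` ?S r"
    by (simp add: insert_absorb)
  then show ?thesis unfolding G_theta_eq_card_image by simp
qed

lemma theta_defect_snoc_mono: "theta_defect \<Theta> r \<le> theta_defect \<Theta> (r @ [a])"
proof (cases "\<Theta> [a] = [a] \<or> a \<in> set r \<or> set (\<Theta> [a]) \<subseteq> set r")
  case True
  then show ?thesis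
    using G_theta_snoc_eq card_theta_pal_set_snoc_le[of r a] by (simp add: theta_defect_def)
next
  case False
  then show ?thesis
    using G_theta_snoc_le[of \<Theta> r a] theta_pal_set_snoc_fresh_letter[of a r]
    by (simp add: theta_defect_def)
qed

lemma new_pal_suffix_if_theta_defect_snoc_eq:
  assumes "a \<in> set r" and "theta_defect \<Theta> (r @ [a]) = theta_defect \<Theta> r"
  obtains P where "\<Theta> P = P" and "suffix P (r @ [a])" and "\<not> sublist P r"
proof -
  have "G_theta \<Theta> (r @ [a]) = G_theta \<Theta> r"
    using assms(1) by (intro G_theta_snoc_eq) simp
  then have "theta_pal_set \<Theta> r \<noteq> theta_pal_set \<Theta> (r @ [a])"
    using assms(2) by (auto simp: theta_defect_def)
  then have "theta_pal_set \<Theta> r \<subset> theta_pal_set \<Theta> (r @ [a])"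
    using theta_pal_set_mono_snoc by (rule psubsetI[rotated])
  then obtain P where "P \<in> theta_pal_set \<Theta> (r @ [a]) - theta_pal_set \<Theta> r"
    by (blast dest: psubset_imp_ex_mem)
  then have "\<Theta> P = P" "suffix P (r @ [a])" "\<not> sublist P r"
    by (auto simp: theta_pal_set_eq sublist_snoc simp del: suffix_snoc)
  then show ?thesis by (rule that)
qed

lemma sublist_theta_if_theta_defect_snoc_eq:
  assumes "theta_defect \<Theta> (r @ [a]) = theta_defect \<Theta> r"
    and "suffix w (r @ [a])" and "w \<noteq> []" and "sublist w r"
  shows "sublist (\<Theta> w) (r @ [a])"
proof -
  have "a \<in> set r"
    using assms(2,3) set_mono_sublist[OF assms(4)] by auto
  then obtain P where P: "\<Theta> P = P" "suffix P (r @ [a])" "\<not> sublist P r"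
    using new_pal_suffix_if_theta_defect_snoc_eq assms(1) by blast
  have "\<not> suffix P w"
    using P(3) sublist_order.order.trans[OF suffix_imp_sublist assms(4)] by blast
  then have "suffix w P" using suffix_same_cases[OF P(2) assms(2)] by blast
  then have "prefix (\<Theta> w) P" using P(1) by (rule prefix_theta_if_suffix_of_pal)
  then show ?thesis
    using sublist_order.order.trans[OF prefix_imp_sublist suffix_imp_sublist[OF P(2)]] by blast
qed

end

lemma mono_bounded_eventually_const:
  fixes f :: "nat \<Rightarrow> int"
  assumes "mono f" and "\<And>n. f n \<le> B"
  obtains N where "\<And>n. N \<le> n \<Longrightarrow> f n = f N"
proof -
  have "range f \<subseteq> {f 0..B}"
    using assms(2) monoD[OF assms(1), of 0] by auto
  then have fin: "finite (range f)"
    using finite_subset by blast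
  have "Max (range f) \<in> range f"
    using Max_in[OF fin] by simp
  then obtain N where N: "f N = Max (range f)"
    by (metis rangeE)
  have "f n = f N" if "N \<le> n" for n
    using Max_ge[OF fin, of "f n"] monoD[OF assms(1) that] N by simp
  then show ?thesis by (rule that)
qed

lemma inf_factor_if_sublist_prefix:
  assumes "sublist v (map u [0..<n])"
  shows "inf_factor v u"
proof -
  obtain p s where e: "map u [0..<n] = p @ v @ s"
    using assms by (auto simp: sublist_def)
  have "length p + length v \<le> n"
    using arg_cong[OF e, of length] by simp
  moreover have "v = take (length v) (drop (length p) (map u [0..<n]))"
    using e by simp
  ultimately have "v = map u [length p..<length p + length v]"
    by (simp add: drop_map take_map)
  then show ?thesis by (auto simp: inf_factor_def occurs_at_def)
qed

lemma map_upt_append_if_occurs_at: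
  assumes "occurs_at u w i" and "i + length w \<le> n"
  shows "map u [0..<n] = map u [0..<i] @ w @ map u [i + length w..<n]"
proof -
  obtain k where n: "n = i + length w + k"
    using assms(2) by (rule less_eqE)
  have "[0..<n] = [0..<i] @ [i..<i + length w] @ [i + length w..<n]"
    unfolding n using upt_add_eq_append[of 0 "i + length w" k] upt_add_eq_append[of 0 i "length w"]
    by simp
  then show ?thesis using assms(1) by (simp add: occurs_at_def)
qed

lemma prefix_theta_defect_eventually_const:
  assumes "inv_antimorphism \<Theta>" and "finite_theta_defect \<Theta> u"
  obtains N where
    "\<And>n. N \<le> n \<Longrightarrow> theta_defect \<Theta> (map u [0..<n]) = theta_defect \<Theta> (map u [0..<N])"
proof -
  obtain B where "\<And>v. inf_factor v u \<Longrightarrow> theta_defect \<Theta> v \<le> B"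
    using assms(2) by (auto simp: finite_theta_defect_def)
  moreover have "inf_factor (map u [0..<n]) u" for n
    by (rule inf_factor_if_sublist_prefix[where n = n]) simp
  moreover have "mono (\<lambda>n. theta_defect \<Theta> (map u [0..<n]))"
    using theta_defect_snoc_mono[OF assms(1)] by (simp add: mono_iff_le_Suc)
  ultimately show ?thesis
    using mono_bounded_eventually_const that by blast
qed

lemma inf_factor_theta_if_occurs_twice_after_stabilization:
  assumes "inv_antimorphism \<Theta>"
    and N: "\<And>n. N \<le> n \<Longrightarrow> theta_defect \<Theta> (map u [0..<n]) = theta_defect \<Theta> (map u [0..<N])"
    and i: "N \<le> i" "occurs_at u w i" and j: "i < j" "occurs_at u w j" and "w \<noteq> []"
  shows "inf_factor (\<Theta> w) u"
proof -
  let ?pre = "\<lambda>n. map u [0..<n]"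
  obtain n where n: "j + length w = Suc n"
    using \<open>w \<noteq> []\<close> by (cases w) auto
  have "?pre n @ [u n] = ?pre j @ w"
    using map_upt_append_if_occurs_at[OF j(2), of "j + length w"] by (simp add: n)
  then have "suffix w (?pre n @ [u n])"
    by (metis suffix_def)
  moreover have "i + length w \<le> n"
    using n j(1) by simp
  then have "sublist w (?pre n)"
    using map_upt_append_if_occurs_at[OF i(2)] by (metis sublist_appendI)
  moreover have "theta_defect \<Theta> (?pre n @ [u n]) = theta_defect \<Theta> (?pre n)"
    using N[of n] N[of "Suc n"] i(1) j(1) n by simp
  ultimately have "sublist (\<Theta> w) (?pre (Suc n))"
    using sublist_theta_if_theta_defect_snoc_eq[OF assms(1)] \<open>w \<noteq> []\<close> by simp
  then show ?thesis by (rule inf_factor_if_sublist_prefix)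
qed

theorem lemma1:
  fixes \<Theta> :: "('a::finite) list \<Rightarrow> 'a list" and u :: "nat \<Rightarrow> 'a"
  assumes "inv_antimorphism \<Theta>"
    and "recurrent u"
    and "finite_theta_defect \<Theta> u"
  shows "\<forall>w. inf_factor w u \<longrightarrow> inf_factor (\<Theta> w) u"
proof (intro allI impI)
  fix w assume "inf_factor w u"
  obtain N where N: "\<And>n. N \<le> n \<Longrightarrow> theta_defect \<Theta> (map u [0..<n]) = theta_defect \<Theta> (map u [0..<N])"
    using prefix_theta_defect_eventually_const[OF assms(1,3)] by blast
  show "inf_factor (\<Theta> w) u"
  proof (cases "w = []")
    case True
    then show ?thesis using theta_Nil[OF assms(1)] by (simp add: inf_factor_def occurs_at_def)
  next
    case False
    have occ: "infinite {i. occurs_at u w i}"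
      using assms(2) \<open>inf_factor w u\<close> by (simp add: recurrent_def)
    then obtain i where i: "N \<le> i" "occurs_at u w i"
      unfolding infinite_nat_iff_unbounded_le by blast
    obtain j where j: "i < j" "occurs_at u w j"
      using occ unfolding infinite_nat_iff_unbounded by blast
    show ?thesis
      using inf_factor_theta_if_occurs_twice_after_stabilization[OF assms(1) N i j False] .
  qed
qed

end
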